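(* Let $\Gamma$ be an elliptic graph, $v_0$ an end-vertex of $\Gamma$, and let $\Gamma_{new}$ be obtained from $\Gamma$ by attaching new vertices $v_1,\dots,v_s$ ($s\ge1$), each joined by a single edge to $v_0$ only, such that $\Gamma_{new}$ is an elliptic graph. Let $\check\ell\in Supp(\check P_0^\Gamma)$ and suppose $\Pi:=\{x\in Supp(\check P_0^{\Gamma_{new}}):\check\pi_{(\Gamma,\Gamma_{new})}(x)=\check\ell\}$ is nonempty. Then $$\sum_{x\in\Pi}z^{\Gamma_{new}}(x)=z^{\Gamma}(\check\ell).$$
   Context: For a decorated tree $G$ (vertex set $\mathcal V(G)$, integer decorations $e_v$, genera zero, negative definite form on $L(G)=\mathbb Z\langle E_v\rangle$ with $(E_v,E_v)=e_v$, $(E_v,E_w)=1$ for adjacent $v\ne w$, $0$ otherwise) let $L'(G)=\{l'\in L(G)\otimes\mathbb Q:(l',L(G))\subset\mathbb Z\}$, $E_v^*$ with $(E_v^*,E_w)=-\delta_{vw}$, $\delta_v$ the valency, $E^G=\sum E_v$, $Z_K^G$ with $(Z_K^G,E_v)=e_v+2$, $\chi(l')=-(l',l'-Z_K^G)/2$; $\ge$ coordinatewise, $\prec$ strict in all coordinates, $l>0$ if $l\ge0,l\ne0$. $Z^G(\mathbf t)=\sum_{l'}z^G(l')\mathbf t^{l'}$ is the Taylor expansion at $0$ of $\prod_v(1-\mathbf t^{E_v^*})^{\delta_v-2}$ ($\mathbf t^{l'}=\prod t_v^{l'_v}$). The set of dual exponents is $Supp(\check P_0^G)=\{Z^G_K-E^G-\ell:\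 \ell\in L(G),\ \ell\not\prec0,\ z^G(Z^G_K-E^G-\ell)\ne0\}$. $G$ is elliptic if $e_v\le-2$ for all $v$ and $\min_{l\in L(G),l>0}\chi(l)=0$. An end-vertex of $\Gamma$ is a vertex of valency 1 in $\Gamma$. For a connected full subgraph $\Gamma'\subset\Gamma''$, $\check\pi_{(\Gamma',\Gamma'')}(x)=Z_K^{\Gamma'}-E^{\Gamma'}-(Z_K^{\Gamma''}-E^{\Gamma''}-x)|_{\Gamma'}$, where $|_{\Gamma'}$ restricts coefficients to vertices of $\Gamma'$. *)

theory Defs
  imports Complex_Main
begin

text \<open>Elements of L(G) tensor Q are functions 'v => rat vanishing
 outside V; the value at u is the coefficient of E_u.\<close>

definition supp_in :: "'v set \<Rightarrow> ('v \<Rightarrow> rat) \<Rightarrow> bool" where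
  "supp_in V x \<longleftrightarrow> (\<forall>u. u \<notin> V \<longrightarrow> x u = 0)"

definition in_L :: "'v set \<Rightarrow> ('v \<Rightarrow> rat) \<Rightarrow> bool" where
  "in_L V x \<longleftrightarrow> supp_in V x \<and> (\<forall>u\<in>V. x u \<in> \<int>)"

definition Ebas :: "'v \<Rightarrow> 'v \<Rightarrow> rat" where
  "Ebas v = (\<lambda>u. if u = v then 1 else 0)"

definition EG :: "'v set \<Rightarrow> 'v \<Rightarrow> rat" where
  "EG V = (\<lambda>u. if u \<in> V then 1 else 0)"

definition restr :: "'v set \<Rightarrow> ('v \<Rightarrow> rat) \<Rightarrow> 'v \<Rightarrow> rat" where
  "restr V x = (\<lambda>u. if u \<in> V then x u else 0)"

definition inter :: "'v set \<Rightarrow> ('v \<Rightarrow> 'v \<Rightarrow> bool) \<Rightarrow> ('v \<Rightarrow> int)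
    \<Rightarrow> ('v \<Rightarrow> rat) \<Rightarrow> ('v \<Rightarrow> rat) \<Rightarrow> rat" where
  "inter V adj e x y = (\<Sum>u\<in>V. \<Sum>w\<in>V. x u * y w *
      (if u = w then of_int (e u) else if adj u w then 1 else 0))"

definition valency :: "'v set \<Rightarrow> ('v \<Rightarrow> 'v \<Rightarrow> bool) \<Rightarrow> 'v \<Rightarrow> nat" where
  "valency V adj v = card {w\<in>V. adj v w}"

text \<open>Standing assumptions: a finite (nonempty) tree with negative definite form.\<close>
definition decorated_tree :: "'v set \<Rightarrow> ('v \<Rightarrow> 'v \<Rightarrow> bool) \<Rightarrow> ('v \<Rightarrow> int) \<Rightarrow> bool" where
  "decorated_tree V adj e \<longleftrightarrow>
     finite V \<and> V \<noteq> {} \<and>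
     (\<forall>u w. adj u w \<longrightarrow> u \<in> V \<and> w \<in> V) \<and>
     (\<forall>u w. adj u w \<longrightarrow> adj w u) \<and>
     (\<forall>u. \<not> adj u u) \<and>
     (\<forall>u\<in>V. \<forall>w\<in>V. adj\<^sup>*\<^sup>* u w) \<and>
     card {(u, w). adj u w} = 2 * (card V - 1) \<and>
     (\<forall>x. supp_in V x \<and> x \<noteq> (\<lambda>_. 0) \<longrightarrow> inter V adj e x x < 0)"

definition Estar :: "'v set \<Rightarrow> ('v \<Rightarrow> 'v \<Rightarrow> bool) \<Rightarrow> ('v \<Rightarrow> int) \<Rightarrow> 'v \<Rightarrow> 'v \<Rightarrow> rat" where
  "Estar V adj e v = (THE x. supp_in V x \<and>
      (\<forall>w\<in>V. inter V adj e x (Ebas w) = (if v = w then -1 else 0)))"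

definition ZK :: "'v set \<Rightarrow> ('v \<Rightarrow> 'v \<Rightarrow> bool) \<Rightarrow> ('v \<Rightarrow> int) \<Rightarrow> 'v \<Rightarrow> rat" where
  "ZK V adj e = (THE x. supp_in V x \<and>
      (\<forall>w\<in>V. inter V adj e x (Ebas w) = of_int (e w) + 2))"

definition chi :: "'v set \<Rightarrow> ('v \<Rightarrow> 'v \<Rightarrow> bool) \<Rightarrow> ('v \<Rightarrow> int) \<Rightarrow> ('v \<Rightarrow> rat) \<Rightarrow> rat" where
  "chi V adj e l = - inter V adj e l (l - ZK V adj e) / 2"

definition pos_vec :: "'v set \<Rightarrow> ('v \<Rightarrow> rat) \<Rightarrow> bool" where
  "pos_vec V l \<longleftrightarrow> (\<forall>u\<in>V. l u \<ge> 0) \<and> (\<exists>u\<in>V. l u \<noteq> 0)"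

definition strict_neg :: "'v set \<Rightarrow> ('v \<Rightarrow> rat) \<Rightarrow> bool" where
  "strict_neg V l \<longleftrightarrow> (\<forall>u\<in>V. l u < 0)"

definition elliptic :: "'v set \<Rightarrow> ('v \<Rightarrow> 'v \<Rightarrow> bool) \<Rightarrow> ('v \<Rightarrow> int) \<Rightarrow> bool" where
  "elliptic V adj e \<longleftrightarrow> decorated_tree V adj e \<and> (\<forall>v\<in>V. e v \<le> -2) \<and>
     (\<forall>l. in_L V l \<and> pos_vec V l \<longrightarrow> chi V adj e l \<ge> 0) \<and>
     (\<exists>l. in_L V l \<and> pos_vec V l \<and> chi V adj e l = 0)"

text \<open>Coefficient of x^k in the Taylor expansion of (1-x)^n at 0, n an integer.\<close>
definition taylor_coeff :: "int \<Rightarrow> nat \<Rightarrow> int" where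
  "taylor_coeff n k = (if n \<ge> 0 then (-1) ^ k * int (nat n choose k)
                       else int ((k + nat (- n) - 1) choose k))"

text \<open>z^G(l'): coefficient of t^{l'} in the expansion of prod_v (1 - t^{E_v^*})^{delta_v - 2},
  obtained by multiplying out the single-variable expansions of the factors.\<close>
definition zcoef :: "'v set \<Rightarrow> ('v \<Rightarrow> 'v \<Rightarrow> bool) \<Rightarrow> ('v \<Rightarrow> int) \<Rightarrow> ('v \<Rightarrow> rat) \<Rightarrow> int" where
  "zcoef V adj e l' = (\<Sum>k\<in>{k :: 'v \<Rightarrow> nat. (\<forall>u. u \<notin> V \<longrightarrow> k u = 0) \<and>
        (\<lambda>u. \<Sum>v\<in>V. of_nat (k v) * Estar V adj e v u) = l'}.
      \<Prod>v\<in>V. taylor_coeff (int (valency V adj v) - 2) (k v))"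

definition supp_dual :: "'v set \<Rightarrow> ('v \<Rightarrow> 'v \<Rightarrow> bool) \<Rightarrow> ('v \<Rightarrow> int) \<Rightarrow> ('v \<Rightarrow> rat) set" where
  "supp_dual V adj e = {ZK V adj e - EG V - l | l. in_L V l \<and> \<not> strict_neg V l \<and>
       zcoef V adj e (ZK V adj e - EG V - l) \<noteq> 0}"

definition proj_dual :: "'v set \<Rightarrow> ('v \<Rightarrow> 'v \<Rightarrow> bool) \<Rightarrow> ('v \<Rightarrow> int) \<Rightarrow>
    'v set \<Rightarrow> ('v \<Rightarrow> 'v \<Rightarrow> bool) \<Rightarrow> ('v \<Rightarrow> int) \<Rightarrow> ('v \<Rightarrow> rat) \<Rightarrow> 'v \<Rightarrow> rat" where
  "proj_dual V1 adj1 e1 V2 adj2 e2 x =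
     ZK V1 adj1 e1 - EG V1 - restr V1 (ZK V2 adj2 e2 - EG V2 - x)"

end

theory Submission
  imports Defs
begin

text \<open>
  Write lc = Z_K - E - l and the points of the fibre as x = Z_K - E - L with L = l on the old
  vertices. The coefficient z(x) is nonzero only if every k_u = -(x, E_u) is a natural number,
  and then it is the product over u of the coefficients of t^(k_u) in (1 - t)^(delta_u - 2).
  Old vertices other than v0 keep their k_u and their valency. A new vertex w has valency 1,
  so it contributes the factor 1, and k_w = l_(v0) - 1 + e_w L_w >= 0 says exactly that
  L_w <= b_w = (l_(v0) - 1) div |e_w|. Substituting L_w = b_w - n_w with n_w >= 0 turns k_(v0)
  into J - |n| for a fixed integer J, while v0 now has valency 1 + s. Hence the fibre is
  parametrised by the lattice points of the simplex |n| <= J, and its total coefficient is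
  z(lc) times the coefficient of t^J in (1 - t)^(s - 1) (1 - t)^(-s) = (1 - t)^(-1), i.e. 1.
\<close>

section \<open>Taylor coefficients of (1 - t)^n summed over a simplex\<close>

definition lattice_simplex :: "'v set \<Rightarrow> nat \<Rightarrow> ('v \<Rightarrow> nat) set" where
  "lattice_simplex W J = {n. (\<forall>u. u \<notin> W \<longrightarrow> n u = 0) \<and> sum n W \<le> J}"

lemma lattice_simplex_empty [simp]: "lattice_simplex {} J = {\<lambda>_. 0}"
  unfolding lattice_simplex_def by (auto simp: fun_eq_iff)

lemma finite_lattice_simplex:
  assumes "finite W"
  shows "finite (lattice_simplex W J)"
proof (rule finite_subset)
  show "lattice_simplex W J \<subseteq> {n. \<forall>u. (u \<in> W \<longrightarrow> n u \<in> {..J}) \<and> (u \<notin> W \<longrightarrow> n u = 0)}"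
  proof (intro subsetI CollectI allI conjI impI)
    fix n u assume n: "n \<in> lattice_simplex W J"
    show "n u = 0" if "u \<notin> W" using n that by (simp add: lattice_simplex_def)
    show "n u \<in> {..J}" if "u \<in> W"
      using n member_le_sum[OF that _ assms, of n] by (simp add: lattice_simplex_def)
  qed
  show "finite {n. \<forall>u. (u \<in> W \<longrightarrow> n u \<in> {..J}) \<and> (u \<notin> W \<longrightarrow> n u = 0)}"
    using assms by (intro finite_set_of_finite_funs) auto
qed

lemma sum_fun_upd_insert:
  assumes "finite W" "w \<notin> W"
  shows "sum (n(w := m)) (insert w W) = m + sum n W"
proof -
  have "sum (n(w := m)) W = sum n W"
    using assms(2) by (intro sum.cong) auto
  then show ?thesis using assms by simp
qed

lemma sum_lattice_simplex_insert:
  assumes "finite W" "w \<notin> W"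
  shows "(\<Sum>n\<in>lattice_simplex (insert w W) J. f n) =
         (\<Sum>m\<le>J. \<Sum>n\<in>lattice_simplex W (J - m). f (n(w := m)))"
proof -
  have "(\<Sum>m\<le>J. \<Sum>n\<in>lattice_simplex W (J - m). f (n(w := m))) =
        (\<Sum>(m, n)\<in>(SIGMA m:{..J}. lattice_simplex W (J - m)). f (n(w := m)))"
    using assms(1) by (simp add: sum.Sigma finite_lattice_simplex)
  also have "\<dots> = (\<Sum>n\<in>lattice_simplex (insert w W) J. f n)"
  proof (rule sum.reindex_bij_witness[where i = "\<lambda>n. (n w, n(w := 0))" and j = "\<lambda>(m, n). n(w := m)"])
    fix p assume "p \<in> (SIGMA m:{..J}. lattice_simplex W (J - m))"
    moreover obtain m n where "p = (m, n)" by fastforce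
    ultimately have p: "p = (m, n)" "m \<le> J" "\<forall>u. u \<notin> W \<longrightarrow> n u = 0" "sum n W \<le> J - m"
      by (simp_all add: lattice_simplex_def)
    then show "(\<lambda>n. (n w, n(w := 0))) ((\<lambda>(m, n). n(w := m)) p) = p"
      using assms(2) by (auto simp: fun_eq_iff)
    show "(\<lambda>(m, n). n(w := m)) p \<in> lattice_simplex (insert w W) J"
      using p sum_fun_upd_insert[OF assms, of n m] by (simp add: lattice_simplex_def)
  next
    fix n assume "n \<in> lattice_simplex (insert w W) J"
    then have n: "\<forall>u. u \<notin> insert w W \<longrightarrow> n u = 0" "n w + sum (n(w := 0)) W \<le> J"
      using sum_fun_upd_insert[OF assms, of "n(w := 0)" "n w"] by (simp_all add: lattice_simplex_def)
    show "(\<lambda>(m, n). n(w := m)) (n w, n(w := 0)) = n" by simp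
    show "(n w, n(w := 0)) \<in> (SIGMA m:{..J}. lattice_simplex W (J - m))"
      using n by (simp add: lattice_simplex_def)
  qed auto
  finally show ?thesis by simp
qed

lemma taylor_coeff_gbinomial:
  "(of_int (taylor_coeff n k) :: rat) = (-1) ^ k * (of_int n gchoose k)"
proof (cases "n \<ge> 0")
  case True
  then show ?thesis
    by (simp add: taylor_coeff_def binomial_gbinomial[where 'a = rat])
next
  case False
  then obtain m where m: "n = - int m" "m > 0"
    using neg_int_cases[of n] by force
  then have "((- of_nat m :: rat) gchoose k) = (-1) ^ k * of_nat ((k + m - 1) choose k)"
    by (simp add: gbinomial_minus binomial_gbinomial[where 'a = rat] add.commute of_nat_diff)
  then show ?thesis
    using m by (simp add: taylor_coeff_def)
qed

lemma taylor_coeff_minus_one [simp]: "taylor_coeff (-1) k = 1"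
  by (simp add: taylor_coeff_def)

lemma sum_taylor_coeff_atMost: "(\<Sum>i\<le>J. taylor_coeff (r + 1) i) = taylor_coeff r J"
proof -
  have "(\<Sum>i\<le>J. of_int (taylor_coeff (r + 1) i)) = (of_int (taylor_coeff r J) :: rat)"
    using gbinomial_sum_lower_neg[of "of_int (r + 1) :: rat" J]
    by (simp add: taylor_coeff_gbinomial mult.commute)
  then show ?thesis by (metis of_int_eq_iff of_int_sum)
qed

text \<open>The coefficient of t^J in (1 - t)^(card W + r) (1 - t)^(- card W), where the second factor
  is the product over w in W of the geometric series in t_w, specialised to t_w = t.\<close>
lemma sum_lattice_simplex_taylor_coeff:
  assumes "finite W"
  shows "(\<Sum>n\<in>lattice_simplex W J. taylor_coeff (int (card W) + r) (J - sum n W)) = taylor_coeff r J"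
  using assms
proof (induction W arbitrary: r J rule: finite_induct)
  case empty
  then show ?case by simp
next
  case (insert w W)
  have "(\<Sum>n\<in>lattice_simplex (insert w W) J. taylor_coeff (int (card (insert w W)) + r) (J - sum n (insert w W)))
      = (\<Sum>m\<le>J. \<Sum>n\<in>lattice_simplex W (J - m). taylor_coeff (int (card W) + (r + 1)) (J - m - sum n W))"
    unfolding sum_lattice_simplex_insert[OF insert.hyps] sum_fun_upd_insert[OF insert.hyps]
      card_insert_disjoint[OF insert.hyps]
    by (simp add: algebra_simps)
  also have "\<dots> = (\<Sum>m\<le>J. taylor_coeff (r + 1) (J - m))"
    by (intro sum.cong refl insert.IH)
  also have "\<dots> = (\<Sum>i\<le>J. taylor_coeff (r + 1) i)"
    by (rule sum.reindex_bij_witness[where i = "\<lambda>i. J - i" and j = "\<lambda>i. J - i"]) auto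
  finally show ?case by (simp add: sum_taylor_coeff_atMost)
qed

section \<open>Negative definite forms are nondegenerate\<close>

definition quad_form :: "'v set \<Rightarrow> ('v \<Rightarrow> 'v \<Rightarrow> rat) \<Rightarrow> ('v \<Rightarrow> rat) \<Rightarrow> rat" where
  "quad_form V M x = (\<Sum>u\<in>V. \<Sum>w\<in>V. x u * x w * M u w)"

definition neg_definite_on :: "'v set \<Rightarrow> ('v \<Rightarrow> 'v \<Rightarrow> rat) \<Rightarrow> bool" where
  "neg_definite_on V M \<longleftrightarrow> (\<forall>x. supp_in V x \<and> x \<noteq> (\<lambda>_. 0) \<longrightarrow> quad_form V M x < 0)"

lemma quad_form_insert:
  assumes "finite V" "a \<notin> V" "\<And>u w. M u w = M w u"
  shows "quad_form (insert a V) M x =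
    x a * x a * M a a + 2 * x a * (\<Sum>w\<in>V. x w * M w a) + quad_form V M x"
proof -
  have "(\<Sum>w\<in>V. x a * x w * M a w) = x a * (\<Sum>w\<in>V. x w * M w a)"
    and "(\<Sum>u\<in>V. x u * x a * M u a) = x a * (\<Sum>w\<in>V. x w * M w a)"
    by (simp_all add: sum_distrib_left assms(3) mult_ac)
  with assms(1,2) show ?thesis
    by (simp add: quad_form_def sum.distrib)
qed

lemma quad_form_Ebas:
  assumes "finite V" "a \<in> V"
  shows "quad_form V M (Ebas a) = M a a"
proof -
  have "quad_form V M (Ebas a) = (\<Sum>u\<in>V. if u = a then (\<Sum>w\<in>V. if w = a then M u w else 0) else 0)"
    unfolding quad_form_def Ebas_def by (intro sum.cong refl) (auto intro!: sum.cong)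
  with assms show ?thesis by simp
qed

lemma neg_definite_on_diag:
  assumes "neg_definite_on V M" "finite V" "a \<in> V"
  shows "M a a < 0"
proof -
  have "supp_in V (Ebas a)" "Ebas a \<noteq> (\<lambda>_. 0)"
    using assms(3) by (auto simp: supp_in_def Ebas_def fun_eq_iff)
  with assms show ?thesis
    by (metis neg_definite_on_def quad_form_Ebas)
qed

lemma neg_definite_schur_complement:
  assumes "finite V" "a \<notin> V" "\<And>u w. M u w = M w u"
    and neg: "neg_definite_on (insert a V) M"
  shows "neg_definite_on V (\<lambda>u w. M u w - M u a * M a w / M a a)"
  unfolding neg_definite_on_def
proof (intro allI impI, elim conjE)
  fix y assume y: "supp_in V y" "y \<noteq> (\<lambda>_. 0)"
  have "M a a < 0"
    using neg_definite_on_diag[OF neg] assms(1) by simp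
  define S where "S = (\<Sum>w\<in>V. y w * M w a)"
  define z where "z = y(a := - S / M a a)"
  have "supp_in (insert a V) z" "z \<noteq> (\<lambda>_. 0)"
    using y assms(2) by (auto simp: z_def supp_in_def fun_eq_iff)
  then have "quad_form (insert a V) M z < 0"
    using neg by (simp add: neg_definite_on_def)
  moreover have "(\<Sum>w\<in>V. z w * M w a) = S" "quad_form V M z = quad_form V M y"
    using assms(2) by (auto simp: S_def z_def quad_form_def intro!: sum.cong)
  ultimately have "(S / M a a) * (S / M a a) * M a a - 2 * (S / M a a) * S + quad_form V M y < 0"
    using quad_form_insert[of V a M z] assms(1-3) by (simp add: z_def)
  then have "quad_form V M y - S * S / M a a < 0"
    using \<open>M a a < 0\<close> by (simp add: field_simps)
  moreover have "quad_form V (\<lambda>u w. M u w - M u a * M a w / M a a) y = quad_form V M y - S * S / M a a"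
  proof -
    have "(\<Sum>u\<in>V. \<Sum>w\<in>V. y u * y w * (M u a * M a w / M a a)) =
        (\<Sum>u\<in>V. y u * M u a) * (\<Sum>w\<in>V. y w * M w a) / M a a"
      by (simp add: sum_product sum_divide_distrib assms(3) mult_ac)
    then show ?thesis
      by (simp add: quad_form_def S_def right_diff_distrib sum_subtractf assms(3))
  qed
  ultimately show "quad_form V (\<lambda>u w. M u w - M u a * M a w / M a a) y < 0" by simp
qed

text \<open>Gaussian elimination: solve for the pivot variable a and recurse on the Schur complement.\<close>
lemma neg_definite_solvable:
  assumes "finite V" "\<And>u w. M u w = M w u" "neg_definite_on V M"
  shows "\<exists>x. supp_in V x \<and> (\<forall>u\<in>V. (\<Sum>b\<in>V. x b * M b u) = c u)"
  using assms
proof (induction V arbitrary: M c rule: finite_induct)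
  case empty
  show ?case by (auto simp: supp_in_def)
next
  case (insert a V)
  define M' where "M' = (\<lambda>u w. M u w - M u a * M a w / M a a)"
  have "M a a < 0"
    using neg_definite_on_diag[OF insert.prems(2)] insert.hyps by simp
  have "neg_definite_on V M'"
    unfolding M'_def using insert.hyps insert.prems by (rule neg_definite_schur_complement)
  moreover have "M' u w = M' w u" for u w
    unfolding M'_def using insert.prems(1) by (simp add: mult.commute)
  ultimately obtain y where y: "supp_in V y"
    "\<And>u. u \<in> V \<Longrightarrow> (\<Sum>b\<in>V. y b * M' b u) = c u - c a * M a u / M a a"
    using insert.IH[of M' "\<lambda>u. c u - c a * M a u / M a a"] by blast
  define S where "S = (\<Sum>b\<in>V. y b * M b a)"
  define x where "x = y(a := (c a - S) / M a a)"
  have sum_x: "(\<Sum>b\<in>insert a V. x b * M b u) = (c a - S) / M a a * M a u + (\<Sum>b\<in>V. y b * M b u)" for u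
  proof -
    have "(\<Sum>b\<in>V. x b * M b u) = (\<Sum>b\<in>V. y b * M b u)"
      using insert.hyps by (intro sum.cong) (auto simp: x_def)
    then show ?thesis using insert.hyps by (simp add: x_def)
  qed
  have "(\<Sum>b\<in>V. y b * M b u) = c u - (c a - S) / M a a * M a u" if "u \<in> V" for u
  proof -
    have "(\<Sum>b\<in>V. y b * M' b u) = (\<Sum>b\<in>V. y b * M b u - y b * M b a * (M a u / M a a))"
      by (simp add: M'_def algebra_simps)
    also have "\<dots> = (\<Sum>b\<in>V. y b * M b u) - S * (M a u / M a a)"
      by (simp add: S_def sum_subtractf sum_distrib_right sum_divide_distrib)
    finally show ?thesis
      using y(2)[OF that] by (simp add: algebra_simps diff_divide_distrib)
  qed
  then have "\<forall>u\<in>insert a V. (\<Sum>b\<in>insert a V. x b * M b u) = c u"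
    using \<open>M a a < 0\<close> by (auto simp: sum_x S_def)
  moreover have "supp_in (insert a V) x"
    using y(1) by (auto simp: x_def supp_in_def)
  ultimately show ?case by blast
qed

section \<open>Intersection numbers on a decorated tree\<close>

definition form_matrix :: "('v \<Rightarrow> 'v \<Rightarrow> bool) \<Rightarrow> ('v \<Rightarrow> int) \<Rightarrow> 'v \<Rightarrow> 'v \<Rightarrow> rat" where
  "form_matrix adj e u w = (if u = w then of_int (e u) else if adj u w then 1 else 0)"

definition pair_E :: "'v set \<Rightarrow> ('v \<Rightarrow> 'v \<Rightarrow> bool) \<Rightarrow> ('v \<Rightarrow> int) \<Rightarrow> ('v \<Rightarrow> rat) \<Rightarrow> 'v \<Rightarrow> rat" where
  "pair_E V adj e x u = (\<Sum>a\<in>V. x a * form_matrix adj e a u)"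

lemma inter_Ebas_eq_pair_E:
  assumes "finite V" "u \<in> V"
  shows "inter V adj e x (Ebas u) = pair_E V adj e x u"
  unfolding inter_def pair_E_def
proof (intro sum.cong refl)
  fix a
  have "(\<Sum>w\<in>V. x a * Ebas u w * (if a = w then of_int (e a) else if adj a w then 1 else 0))
     = (\<Sum>w\<in>V. if w = u then x a * form_matrix adj e a u else 0)"
    by (rule sum.cong) (auto simp: Ebas_def form_matrix_def)
  with assms show "(\<Sum>w\<in>V. x a * Ebas u w * (if a = w then of_int (e a) else if adj a w then 1 else 0))
      = x a * form_matrix adj e a u" by simp
qed

lemma inter_self_eq_quad_form: "inter V adj e x x = quad_form V (form_matrix adj e) x"
  unfolding inter_def quad_form_def form_matrix_def by simp

lemma inter_self_eq_sum_pair_E: "inter V adj e x x = (\<Sum>w\<in>V. x w * pair_E V adj e x w)"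
  unfolding inter_def pair_E_def form_matrix_def
  by (subst sum.swap) (simp add: sum_distrib_left mult_ac)

lemma pair_E_diff: "pair_E V adj e (x - y) u = pair_E V adj e x u - pair_E V adj e y u"
  unfolding pair_E_def by (simp add: sum_subtractf left_diff_distrib)

lemma pair_E_cong:
  assumes "\<And>u. u \<in> V \<Longrightarrow> x u = y u"
  shows "pair_E V adj e x w = pair_E V adj e y w"
  unfolding pair_E_def using assms by simp

definition Estar_comb :: "'v set \<Rightarrow> ('v \<Rightarrow> 'v \<Rightarrow> bool) \<Rightarrow> ('v \<Rightarrow> int) \<Rightarrow> ('v \<Rightarrow> nat) \<Rightarrow> 'v \<Rightarrow> rat" where
  "Estar_comb V adj e k = (\<lambda>u. \<Sum>v\<in>V. of_nat (k v) * Estar V adj e v u)"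

lemma zcoef_Estar_comb:
  "zcoef V adj e l = (\<Sum>k\<in>{k. (\<forall>u. u \<notin> V \<longrightarrow> k u = 0) \<and> Estar_comb V adj e k = l}.
      \<Prod>v\<in>V. taylor_coeff (int (valency V adj v) - 2) (k v))"
  unfolding zcoef_def Estar_comb_def ..

context
  fixes V :: "'v set" and adj :: "'v \<Rightarrow> 'v \<Rightarrow> bool" and e :: "'v \<Rightarrow> int"
  assumes tree: "decorated_tree V adj e"
begin

lemma decorated_tree_finite: "finite V"
  using tree by (simp add: decorated_tree_def)

lemma decorated_tree_sym: "adj u w \<Longrightarrow> adj w u"
  using tree by (simp add: decorated_tree_def)

lemma decorated_tree_irrefl: "\<not> adj u u"
  using tree by (simp add: decorated_tree_def)

lemma decorated_tree_adj_in: "adj u w \<Longrightarrow> u \<in> V \<and> w \<in> V"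
  using tree by (simp add: decorated_tree_def)

lemma decorated_tree_neg_definite: "neg_definite_on V (form_matrix adj e)"
  using tree by (simp add: decorated_tree_def neg_definite_on_def inter_self_eq_quad_form)

lemma decorated_tree_decoration_neg: "u \<in> V \<Longrightarrow> e u < 0"
  using neg_definite_on_diag[OF decorated_tree_neg_definite decorated_tree_finite]
  by (simp add: form_matrix_def)

lemma pair_E_inj:
  assumes "supp_in V x" "supp_in V y" "\<And>u. u \<in> V \<Longrightarrow> pair_E V adj e x u = pair_E V adj e y u"
  shows "x = y"
proof (rule ccontr)
  assume "x \<noteq> y"
  then have "supp_in V (x - y)" "x - y \<noteq> (\<lambda>_. 0)"
    using assms(1,2) by (auto simp: supp_in_def fun_eq_iff)
  then have "inter V adj e (x - y) (x - y) < 0"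
    using tree by (simp add: decorated_tree_def)
  moreover have "inter V adj e (x - y) (x - y) = 0"
    unfolding inter_self_eq_sum_pair_E pair_E_diff using assms(3) by simp
  ultimately show False by simp
qed

lemma the_pair_E_solution:
  fixes c :: "'v \<Rightarrow> rat"
  defines "x \<equiv> THE x. supp_in V x \<and> (\<forall>w\<in>V. inter V adj e x (Ebas w) = c w)"
  shows "supp_in V x" "\<And>w. w \<in> V \<Longrightarrow> pair_E V adj e x w = c w"
proof -
  have iff: "(\<forall>w\<in>V. inter V adj e y (Ebas w) = c w) \<longleftrightarrow> (\<forall>w\<in>V. pair_E V adj e y w = c w)" for y
    using inter_Ebas_eq_pair_E[OF decorated_tree_finite] by simp
  obtain y where "supp_in V y" "\<forall>w\<in>V. pair_E V adj e y w = c w"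
    using neg_definite_solvable[OF decorated_tree_finite _ decorated_tree_neg_definite]
      decorated_tree_sym
    by (fastforce simp: pair_E_def form_matrix_def)
  then have "\<exists>!x. supp_in V x \<and> (\<forall>w\<in>V. inter V adj e x (Ebas w) = c w)"
    unfolding iff by (metis pair_E_inj)
  from theI'[OF this] show "supp_in V x" "\<And>w. w \<in> V \<Longrightarrow> pair_E V adj e x w = c w"
    unfolding x_def iff by auto
qed

lemma supp_Estar: "supp_in V (Estar V adj e v)"
  and pair_E_Estar: "w \<in> V \<Longrightarrow> pair_E V adj e (Estar V adj e v) w = (if v = w then -1 else 0)"
  unfolding Estar_def by (rule the_pair_E_solution)+

lemma supp_ZK: "supp_in V (ZK V adj e)"
  and pair_E_ZK: "w \<in> V \<Longrightarrow> pair_E V adj e (ZK V adj e) w = of_int (e w) + 2"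
  unfolding ZK_def by (rule the_pair_E_solution)+

lemma pair_E_EG:
  assumes "u \<in> V"
  shows "pair_E V adj e (EG V) u = of_int (e u) + of_nat (valency V adj u)"
proof -
  have "pair_E V adj e (EG V) u = (\<Sum>a\<in>V. (if a = u then of_int (e u) else 0) + of_bool (adj a u))"
    unfolding pair_E_def EG_def form_matrix_def
    by (intro sum.cong refl) (auto simp: decorated_tree_irrefl)
  also have "\<dots> = of_int (e u) + of_nat (card {w\<in>V. adj w u})"
    using decorated_tree_finite assms by (simp add: sum.distrib Collect_conj_eq)
  also have "{w\<in>V. adj w u} = {w\<in>V. adj u w}"
    using decorated_tree_sym by blast
  finally show ?thesis unfolding valency_def by simp
qed

lemma pair_E_canonical:
  "u \<in> V \<Longrightarrow> pair_E V adj e (ZK V adj e - EG V) u = 2 - of_nat (valency V adj u)"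
  by (simp add: pair_E_diff pair_E_ZK pair_E_EG)

lemma supp_Estar_comb: "supp_in V (Estar_comb V adj e k)"
  using supp_Estar by (simp add: supp_in_def Estar_comb_def)

lemma pair_E_Estar_comb:
  assumes "w \<in> V"
  shows "pair_E V adj e (Estar_comb V adj e k) w = - of_nat (k w)"
proof -
  have "pair_E V adj e (Estar_comb V adj e k) w
      = (\<Sum>v\<in>V. of_nat (k v) * pair_E V adj e (Estar V adj e v) w)"
    unfolding pair_E_def Estar_comb_def sum_distrib_right
    by (subst sum.swap) (simp add: sum_distrib_left mult_ac)
  also have "\<dots> = (\<Sum>v\<in>V. if v = w then - of_nat (k w) else 0)"
    using assms by (intro sum.cong refl) (simp add: pair_E_Estar)
  finally show ?thesis
    using decorated_tree_finite assms by simp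
qed

text \<open>The sum defining zcoef has at most one term: as (E*_v, E_w) = -delta_vw, the exponents k
  are read off from the intersection numbers -(l, E_w).\<close>
lemma zcoef_eq_prod:
  assumes "supp_in V l" and k: "\<And>w. w \<in> V \<Longrightarrow> - pair_E V adj e l w = of_nat (k w)"
  shows "zcoef V adj e l = (\<Prod>v\<in>V. taylor_coeff (int (valency V adj v) - 2) (k v))"
proof -
  define k0 where "k0 = (\<lambda>u. if u \<in> V then k u else 0)"
  have "{k. (\<forall>u. u \<notin> V \<longrightarrow> k u = 0) \<and> Estar_comb V adj e k = l} = {k0}"
  proof (intro set_eqI iffI)
    fix k' assume "k' \<in> {k. (\<forall>u. u \<notin> V \<longrightarrow> k u = 0) \<and> Estar_comb V adj e k = l}"
    then have "\<forall>u. u \<notin> V \<longrightarrow> k' u = 0" "\<And>u. u \<in> V \<Longrightarrow> of_nat (k' u) = - pair_E V adj e l u"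
      using pair_E_Estar_comb[of _ k'] by auto
    then show "k' \<in> {k0}"
      using k by (auto simp: k0_def fun_eq_iff)
  next
    fix k' assume "k' \<in> {k0}"
    moreover have "Estar_comb V adj e k0 = l"
    proof (rule pair_E_inj)
      show "supp_in V (Estar_comb V adj e k0)"
        by (rule supp_Estar_comb)
      show "pair_E V adj e (Estar_comb V adj e k0) u = pair_E V adj e l u"
        if "u \<in> V" for u
        using pair_E_Estar_comb[OF that, of k0] k[OF that] that by (simp add: k0_def)
    qed fact
    ultimately show "k' \<in> {k. (\<forall>u. u \<notin> V \<longrightarrow> k u = 0) \<and> Estar_comb V adj e k = l}"
      by (simp add: k0_def)
  qed
  then show ?thesis
    unfolding zcoef_Estar_comb by (simp add: k0_def)
qed

lemma zcoef_nonzero_imp: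
  assumes "zcoef V adj e l \<noteq> 0"
  shows "supp_in V l" "\<exists>k. \<forall>w\<in>V. - pair_E V adj e l w = of_nat (k w)"
proof -
  have "{k. (\<forall>u. u \<notin> V \<longrightarrow> k u = 0) \<and> Estar_comb V adj e k = l} \<noteq> {}"
    using assms unfolding zcoef_Estar_comb by (intro notI) simp
  then obtain k where l: "l = Estar_comb V adj e k"
    by blast
  show "supp_in V l"
    unfolding l by (rule supp_Estar_comb)
  have "\<forall>w\<in>V. - pair_E V adj e l w = of_nat (k w)"
    unfolding l by (simp add: pair_E_Estar_comb)
  then show "\<exists>k. \<forall>w\<in>V. - pair_E V adj e l w = of_nat (k w)" by blast
qed

end

section \<open>Attaching new leaves at an end-vertex\<close>

lemma proj_dual_canonical_diff:
  "proj_dual V1 adj1 e1 V2 adj2 e2 (ZK V2 adj2 e2 - EG V2 - L) = ZK V1 adj1 e1 - EG V1 - restr V1 L"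
  by (simp add: proj_dual_def restr_def fun_eq_iff)

locale end_vertex_extension =
  fixes V W :: "'a set" and adj adjn :: "'a \<Rightarrow> 'a \<Rightarrow> bool"
    and e en :: "'a \<Rightarrow> int" and v0 :: 'a
  assumes tree: "decorated_tree V adj e"
    and tree_ext: "decorated_tree (V \<union> W) adjn en"
    and v0: "v0 \<in> V" "valency V adj v0 = 1"
    and disjoint: "W \<inter> V = {}"
    and adjn: "\<And>u w. adjn u w \<longleftrightarrow>
         (u \<in> V \<and> w \<in> V \<and> adj u w) \<or> (u = v0 \<and> w \<in> W) \<or> (u \<in> W \<and> w = v0)"
    and en: "\<And>u. u \<in> V \<Longrightarrow> en u = e u"
begin

lemma finite_V: "finite V"
  using decorated_tree_finite[OF tree] .

lemma v0_notin_W: "v0 \<notin> W"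
  using v0(1) disjoint by blast

lemma finite_W: "finite W"
  using decorated_tree_finite[OF tree_ext] by simp

lemma pair_E_ext_split:
  "pair_E (V \<union> W) adjn en x u =
     (\<Sum>a\<in>V. x a * form_matrix adjn en a u) + (\<Sum>a\<in>W. x a * form_matrix adjn en a u)"
  unfolding pair_E_def using finite_V finite_W disjoint by (intro sum.union_disjoint) auto

lemma pair_E_ext_old:
  assumes "u \<in> V"
  shows "pair_E (V \<union> W) adjn en x u = pair_E V adj e x u + (if u = v0 then sum x W else 0)"
proof -
  have "form_matrix adjn en a u = form_matrix adj e a u" if "a \<in> V" for a
    using adjn[of a u] assms that disjoint decorated_tree_adj_in[OF tree] en
    by (auto simp: form_matrix_def)
  moreover have "form_matrix adjn en a u = (if u = v0 then 1 else 0)" if "a \<in> W" for a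
    using adjn[of a u] assms that disjoint v0 by (auto simp: form_matrix_def)
  ultimately show ?thesis
    unfolding pair_E_ext_split by (simp add: pair_E_def sum.If_cases)
qed

lemma pair_E_ext_new:
  assumes "w \<in> W"
  shows "pair_E (V \<union> W) adjn en x w = x v0 + of_int (en w) * x w"
proof -
  have "form_matrix adjn en a w = (if a = v0 then 1 else 0)" if "a \<in> V" for a
    using adjn[of a w] assms that disjoint v0 by (auto simp: form_matrix_def)
  moreover have "form_matrix adjn en a w = (if a = w then of_int (en w) else 0)" if "a \<in> W" for a
    using adjn[of a w] assms that disjoint v0 by (auto simp: form_matrix_def)
  ultimately show ?thesis
    unfolding pair_E_ext_split using finite_V finite_W v0(1) assms
    by (simp add: if_distrib[of "\<lambda>y. _ * y"] sum.If_cases mult.commute cong: sum.cong)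
qed

lemma valency_ext_old: "u \<in> V \<Longrightarrow> u \<noteq> v0 \<Longrightarrow> valency (V \<union> W) adjn u = valency V adj u"
  unfolding valency_def using adjn disjoint decorated_tree_adj_in[OF tree]
  by (metis (no_types, lifting) Collect_cong Un_iff disjoint_iff)

lemma valency_ext_v0: "valency (V \<union> W) adjn v0 = 1 + card W"
proof -
  have "{w \<in> V \<union> W. adjn v0 w} = {w\<in>V. adj v0 w} \<union> W"
    using v0 adjn disjoint decorated_tree_adj_in[OF tree] by blast
  moreover have "card ({w\<in>V. adj v0 w} \<union> W) = card {w\<in>V. adj v0 w} + card W"
    using finite_V finite_W disjoint by (intro card_Un_disjoint) auto
  ultimately show ?thesis using v0(2) unfolding valency_def by simp
qed

lemma valency_ext_new: "w \<in> W \<Longrightarrow> valency (V \<union> W) adjn w = 1"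
proof -
  assume "w \<in> W"
  then have "{x \<in> V \<union> W. adjn w x} = {v0}"
    using v0 adjn disjoint by blast
  then show ?thesis unfolding valency_def by simp
qed

abbreviation "ZK_minus_E \<equiv> ZK V adj e - EG V"
abbreviation "ZK_minus_E_ext \<equiv> ZK (V \<union> W) adjn en - EG (V \<union> W)"

lemma pair_E_ext_shift_old:
  assumes "u \<in> V" "u \<noteq> v0"
  shows "pair_E (V \<union> W) adjn en (ZK_minus_E_ext - L) u = pair_E V adj e (ZK_minus_E - L) u"
proof -
  have "pair_E (V \<union> W) adjn en ZK_minus_E_ext u = pair_E V adj e ZK_minus_E u"
    using pair_E_canonical[OF tree_ext, of u] pair_E_canonical[OF tree, of u] assms
    by (simp add: valency_ext_old)
  then show ?thesis
    using assms unfolding pair_E_diff[of _ _ _ _ L] by (simp add: pair_E_ext_old)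
qed

lemma pair_E_ext_shift_v0:
  "pair_E (V \<union> W) adjn en (ZK_minus_E_ext - L) v0 =
     pair_E V adj e (ZK_minus_E - L) v0 - of_nat (card W) - sum L W"
proof -
  have "pair_E (V \<union> W) adjn en ZK_minus_E_ext v0 = pair_E V adj e ZK_minus_E v0 - of_nat (card W)"
    using pair_E_canonical[OF tree_ext, of v0] pair_E_canonical[OF tree, of v0] v0
    by (simp add: valency_ext_v0)
  then show ?thesis
    using v0 unfolding pair_E_diff[of _ _ _ _ L] by (simp add: pair_E_ext_old)
qed

lemma pair_E_ext_shift_new:
  assumes "w \<in> W"
  shows "pair_E (V \<union> W) adjn en (ZK_minus_E_ext - L) w = 1 - L v0 - of_int (en w) * L w"
proof -
  have "pair_E (V \<union> W) adjn en ZK_minus_E_ext w = 1"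
    using pair_E_canonical[OF tree_ext, of w] assms by (simp add: valency_ext_new)
  then show ?thesis
    using assms unfolding pair_E_diff[of _ _ _ _ L] by (simp add: pair_E_ext_new)
qed

end

section \<open>The fibre of the projection\<close>

locale extension_fibre = end_vertex_extension +
  fixes l :: "'a \<Rightarrow> rat"
  assumes l_in_L: "in_L V l"
    and l_not_strict_neg: "\<not> strict_neg V l"
    and zcoef_base_nonzero: "zcoef V adj e (ZK V adj e - EG V - l) \<noteq> 0"
begin

definition base_exponent :: "'a \<Rightarrow> nat" where
  "base_exponent u = nat \<lfloor>- pair_E V adj e (ZK_minus_E - l) u\<rfloor>"

definition fibre_bound :: "'a \<Rightarrow> int" where
  "fibre_bound w = (\<lfloor>l v0\<rfloor> - 1) div (- en w)"

definition fibre_degree :: int where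
  "fibre_degree = int (card W) + int (base_exponent v0) + sum fibre_bound W"

definition fibre_cycle :: "('a \<Rightarrow> nat) \<Rightarrow> 'a \<Rightarrow> rat" where
  "fibre_cycle n u =
     (if u \<in> V then l u else if u \<in> W then of_int (fibre_bound u - int (n u)) else 0)"

definition fibre_point :: "('a \<Rightarrow> nat) \<Rightarrow> 'a \<Rightarrow> rat" where
  "fibre_point n = ZK_minus_E_ext - fibre_cycle n"

lemma neg_pair_E_base: "u \<in> V \<Longrightarrow> - pair_E V adj e (ZK_minus_E - l) u = of_nat (base_exponent u)"
  using zcoef_nonzero_imp(2)[OF tree zcoef_base_nonzero] unfolding base_exponent_def
  by (metis floor_of_nat nat_int of_int_of_nat_eq)

lemma zcoef_base: "zcoef V adj e (ZK_minus_E - l) =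
    (\<Prod>v\<in>V - {v0}. taylor_coeff (int (valency V adj v) - 2) (base_exponent v))"
proof -
  have "zcoef V adj e (ZK_minus_E - l) = (\<Prod>v\<in>V. taylor_coeff (int (valency V adj v) - 2) (base_exponent v))"
    using zcoef_nonzero_imp(1)[OF tree zcoef_base_nonzero] neg_pair_E_base by (rule zcoef_eq_prod[OF tree])
  also have "\<dots> = (\<Prod>v\<in>V - {v0}. taylor_coeff (int (valency V adj v) - 2) (base_exponent v))"
    using finite_V v0 by (simp add: prod.remove)
  finally show ?thesis .
qed

lemma l_v0_int: "l v0 = of_int \<lfloor>l v0\<rfloor>"
  using l_in_L v0(1) by (auto simp: in_L_def elim: Ints_cases)

lemma decoration_new_neg: "w \<in> W \<Longrightarrow> en w < 0"
  using decorated_tree_decoration_neg[OF tree_ext] by simp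

lemma fibre_cycle_old: "u \<in> V \<Longrightarrow> fibre_cycle n u = l u"
  by (simp add: fibre_cycle_def)

lemma fibre_cycle_new: "w \<in> W \<Longrightarrow> fibre_cycle n w = of_int (fibre_bound w - int (n w))"
  using disjoint by (auto simp: fibre_cycle_def)

lemma pair_E_base_fibre_cycle:
  "pair_E V adj e (ZK_minus_E - fibre_cycle n) u = pair_E V adj e (ZK_minus_E - l) u"
  by (rule pair_E_cong) (simp add: fibre_cycle_old)

lemma neg_pair_E_fibre_point_old:
  "u \<in> V \<Longrightarrow> u \<noteq> v0 \<Longrightarrow> - pair_E (V \<union> W) adjn en (fibre_point n) u = of_nat (base_exponent u)"
  unfolding fibre_point_def
  by (simp add: pair_E_ext_shift_old pair_E_base_fibre_cycle neg_pair_E_base)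

lemma neg_pair_E_fibre_point_v0:
  "- pair_E (V \<union> W) adjn en (fibre_point n) v0 = of_int (fibre_degree - int (sum n W))"
proof -
  have "sum (fibre_cycle n) W = of_int (sum fibre_bound W - int (sum n W))"
    by (simp add: fibre_cycle_new sum_subtractf)
  then show ?thesis
    unfolding fibre_point_def fibre_degree_def
    by (simp add: pair_E_ext_shift_v0 pair_E_base_fibre_cycle neg_pair_E_base[OF v0(1), symmetric])
qed

lemma neg_pair_E_fibre_point_new:
  assumes "w \<in> W"
  shows "- pair_E (V \<union> W) adjn en (fibre_point n) w =
    of_int ((\<lfloor>l v0\<rfloor> - 1) mod (- en w) + (- en w) * int (n w))"
proof -
  have "(\<lfloor>l v0\<rfloor> - 1) mod (- en w) = \<lfloor>l v0\<rfloor> - 1 + en w * fibre_bound w"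
    using mult_div_mod_eq[of "- en w" "\<lfloor>l v0\<rfloor> - 1"] unfolding fibre_bound_def by linarith
  then have "of_int ((\<lfloor>l v0\<rfloor> - 1) mod (- en w)) = l v0 - 1 + of_int (en w) * of_int (fibre_bound w)"
    by (simp add: l_v0_int[symmetric])
  moreover have "- pair_E (V \<union> W) adjn en (fibre_point n) w =
      l v0 - 1 + of_int (en w) * of_int (fibre_bound w - int (n w))"
    using assms v0(1) by (simp add: fibre_point_def pair_E_ext_shift_new fibre_cycle_old fibre_cycle_new)
  ultimately show ?thesis
    by (simp add: algebra_simps)
qed

lemma supp_fibre_point: "supp_in (V \<union> W) (fibre_point n)"
  using supp_ZK[OF tree_ext]
  by (simp add: supp_in_def fibre_point_def fibre_cycle_def EG_def)

definition fibre_exponent :: "('a \<Rightarrow> nat) \<Rightarrow> 'a \<Rightarrow> nat" where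
  "fibre_exponent n v =
     (if v \<in> W then nat ((\<lfloor>l v0\<rfloor> - 1) mod (- en v) + (- en v) * int (n v))
      else if v = v0 then nat fibre_degree - sum n W else base_exponent v)"

lemma neg_pair_E_fibre_point:
  assumes n: "n \<in> lattice_simplex W (nat fibre_degree)" and "0 \<le> fibre_degree" "v \<in> V \<union> W"
  shows "- pair_E (V \<union> W) adjn en (fibre_point n) v = of_nat (fibre_exponent n v)"
proof -
  consider "v \<in> W" | "v = v0" | "v \<in> V" "v \<noteq> v0"
    using assms(3) by blast
  then show ?thesis
  proof cases
    case 1
    have "0 \<le> (\<lfloor>l v0\<rfloor> - 1) mod (- en v)" "0 \<le> (- en v) * int (n v)"
      using decoration_new_neg[OF 1] by (simp_all add: mult_nonpos_nonneg)
    then have "0 \<le> (\<lfloor>l v0\<rfloor> - 1) mod (- en v) + (- en v) * int (n v)"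
      by linarith
    then show ?thesis
      using 1 by (simp add: fibre_exponent_def neg_pair_E_fibre_point_new)
  next
    case 2
    have "sum n W \<le> nat fibre_degree"
      using n by (simp add: lattice_simplex_def)
    then have "fibre_degree - int (sum n W) = int (nat fibre_degree - sum n W)"
      using assms(2) by linarith
    moreover have "fibre_exponent n v = nat fibre_degree - sum n W"
      using 2 v0_notin_W by (simp add: fibre_exponent_def)
    ultimately show ?thesis
      using 2 by (simp only: neg_pair_E_fibre_point_v0 of_int_of_nat_eq)
  next
    case 3
    then show ?thesis
      using disjoint by (auto simp: fibre_exponent_def neg_pair_E_fibre_point_old)
  qed
qed

lemma zcoef_fibre_point:
  assumes "n \<in> lattice_simplex W (nat fibre_degree)" "0 \<le> fibre_degree"
  shows "zcoef (V \<union> W) adjn en (fibre_point n) =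
    taylor_coeff (int (card W) - 1) (nat fibre_degree - sum n W) * zcoef V adj e (ZK_minus_E - l)"
proof -
  let ?k = "fibre_exponent n"
  have "zcoef (V \<union> W) adjn en (fibre_point n) =
      (\<Prod>v\<in>V \<union> W. taylor_coeff (int (valency (V \<union> W) adjn v) - 2) (?k v))"
    using supp_fibre_point neg_pair_E_fibre_point[OF assms] by (rule zcoef_eq_prod[OF tree_ext])
  also have "\<dots> = (\<Prod>v\<in>V. taylor_coeff (int (valency (V \<union> W) adjn v) - 2) (?k v))"
    using finite_V finite_W disjoint by (simp add: prod.union_disjoint valency_ext_new Int_commute)
  also have "\<dots> = taylor_coeff (int (card W) - 1) (?k v0) *
      (\<Prod>v\<in>V - {v0}. taylor_coeff (int (valency (V \<union> W) adjn v) - 2) (?k v))"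
    using finite_V v0(1) by (simp add: prod.remove valency_ext_v0)
  also have "(\<Prod>v\<in>V - {v0}. taylor_coeff (int (valency (V \<union> W) adjn v) - 2) (?k v)) =
      (\<Prod>v\<in>V - {v0}. taylor_coeff (int (valency V adj v) - 2) (base_exponent v))"
    using disjoint by (intro prod.cong refl) (auto simp: valency_ext_old fibre_exponent_def)
  finally show ?thesis
    using v0_notin_W by (simp add: zcoef_base fibre_exponent_def)
qed

lemma supp_l: "supp_in V l"
  using l_in_L by (simp add: in_L_def)

lemma proj_dual_fibre_point:
  "proj_dual V adj e (V \<union> W) adjn en (fibre_point n) = ZK_minus_E - l"
proof -
  have "restr V (fibre_cycle n) = l"
    using supp_l by (auto simp: restr_def fibre_cycle_old supp_in_def)
  then show ?thesis
    by (simp add: fibre_point_def proj_dual_canonical_diff)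
qed

lemma fibre_point_in_supp_dual:
  assumes "zcoef (V \<union> W) adjn en (fibre_point n) \<noteq> 0"
  shows "fibre_point n \<in> supp_dual (V \<union> W) adjn en"
proof -
  have "in_L (V \<union> W) (fibre_cycle n)"
    using l_in_L by (simp add: in_L_def supp_in_def fibre_cycle_def)
  moreover have "\<not> strict_neg (V \<union> W) (fibre_cycle n)"
  proof -
    obtain u where "u \<in> V" "\<not> l u < 0"
      using l_not_strict_neg by (auto simp: strict_neg_def)
    then have "u \<in> V \<union> W" "\<not> fibre_cycle n u < 0"
      by (simp_all add: fibre_cycle_old)
    then show ?thesis
      unfolding strict_neg_def by blast
  qed
  ultimately show ?thesis
    using assms unfolding supp_dual_def fibre_point_def by blast
qed

lemma inj_on_fibre_point: "inj_on fibre_point (lattice_simplex W J)"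
proof
  fix n n' assume n: "n \<in> lattice_simplex W J" "n' \<in> lattice_simplex W J"
    and eq: "fibre_point n = fibre_point n'"
  have "n w = n' w" if "w \<in> W" for w
    using fun_cong[OF eq, of w] that by (simp add: fibre_point_def fibre_cycle_new)
  moreover have "n u = n' u" if "u \<notin> W" for u
    using n that by (simp add: lattice_simplex_def)
  ultimately show "n = n'"
    by blast
qed

lemma le_fibre_bound:
  assumes "w \<in> W" "L v0 = l v0" "L w \<in> \<int>"
    and "0 \<le> - pair_E (V \<union> W) adjn en (ZK_minus_E_ext - L) w"
  shows "\<lfloor>L w\<rfloor> \<le> fibre_bound w"
proof -
  have "L w = of_int \<lfloor>L w\<rfloor>"
    using assms(3) by (auto elim: Ints_cases)
  then have "of_int (\<lfloor>l v0\<rfloor> - 1 + en w * \<lfloor>L w\<rfloor>) = l v0 - 1 + of_int (en w) * L w"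
    by (simp add: l_v0_int[symmetric])
  also have "\<dots> \<ge> 0"
    using assms by (simp add: pair_E_ext_shift_new)
  finally have "(- en w) * \<lfloor>L w\<rfloor> \<le> \<lfloor>l v0\<rfloor> - 1"
    by linarith
  then have "((- en w) * \<lfloor>L w\<rfloor>) div (- en w) \<le> (\<lfloor>l v0\<rfloor> - 1) div (- en w)"
    using decoration_new_neg[OF assms(1)] by (intro zdiv_mono1) simp_all
  then show ?thesis
    using decoration_new_neg[OF assms(1)] by (simp add: fibre_bound_def)
qed

lemma fibre_cycle_of_bounded:
  assumes L: "in_L (V \<union> W) L" and L_old: "\<And>u. u \<in> V \<Longrightarrow> L u = l u"
    and bounded: "\<And>w. w \<in> W \<Longrightarrow> \<lfloor>L w\<rfloor> \<le> fibre_bound w"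
  shows "L = fibre_cycle (\<lambda>u. if u \<in> W then nat (fibre_bound u - \<lfloor>L u\<rfloor>) else 0)"
proof
  fix u
  consider "u \<in> V" | "u \<in> W" | "u \<notin> V \<union> W"
    by blast
  then show "L u = fibre_cycle (\<lambda>u. if u \<in> W then nat (fibre_bound u - \<lfloor>L u\<rfloor>) else 0) u"
  proof cases
    case 1
    then show ?thesis by (simp add: L_old fibre_cycle_old)
  next
    case 2
    then have "L u \<in> \<int>"
      using L by (simp add: in_L_def)
    then show ?thesis
      using 2 bounded[OF 2] by (auto simp: fibre_cycle_new elim: Ints_cases)
  next
    case 3
    then show ?thesis
      using L by (simp add: in_L_def supp_in_def fibre_cycle_def)
  qed
qed

lemma fibre_subset_image:
  assumes "x \<in> supp_dual (V \<union> W) adjn en"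
    and "proj_dual V adj e (V \<union> W) adjn en x = ZK_minus_E - l"
  shows "0 \<le> fibre_degree" "x \<in> fibre_point ` lattice_simplex W (nat fibre_degree)"
proof -
  obtain L where x: "x = ZK_minus_E_ext - L" and L: "in_L (V \<union> W) L"
    and z: "zcoef (V \<union> W) adjn en x \<noteq> 0"
    using assms(1) unfolding supp_dual_def by blast
  have L_old: "L u = l u" if "u \<in> V" for u
    using fun_cong[OF assms(2), of u] that by (simp add: x proj_dual_canonical_diff restr_def)
  have nonneg: "0 \<le> - pair_E (V \<union> W) adjn en x v" if "v \<in> V \<union> W" for v
    using zcoef_nonzero_imp(2)[OF tree_ext z] that by force
  define n where "n u = (if u \<in> W then nat (fibre_bound u - \<lfloor>L u\<rfloor>) else 0)" for u
  have "L = fibre_cycle n"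
    unfolding n_def using L L_old
  proof (rule fibre_cycle_of_bounded)
    show "\<lfloor>L w\<rfloor> \<le> fibre_bound w" if "w \<in> W" for w
      using that L nonneg[of w] L_old[OF v0(1)] by (intro le_fibre_bound) (auto simp: in_L_def x)
  qed
  then have x_eq: "x = fibre_point n"
    by (simp add: x fibre_point_def)
  have "(0::rat) \<le> of_int (fibre_degree - int (sum n W))"
    using nonneg[of v0] v0(1) by (simp add: x_eq neg_pair_E_fibre_point_v0)
  then have le: "int (sum n W) \<le> fibre_degree"
    by (simp only: of_int_0_le_iff diff_ge_0_iff_ge)
  then show "0 \<le> fibre_degree"
    using of_nat_0_le_iff[of "sum n W"] by linarith
  have "\<forall>u. u \<notin> W \<longrightarrow> n u = 0"
    by (simp add: n_def)
  moreover have "sum n W \<le> nat fibre_degree"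
    using le by linarith
  ultimately have "n \<in> lattice_simplex W (nat fibre_degree)"
    by (simp add: lattice_simplex_def)
  then show "x \<in> fibre_point ` lattice_simplex W (nat fibre_degree)"
    using x_eq by blast
qed

lemma sum_zcoef_fibre:
  defines "F \<equiv> {x \<in> supp_dual (V \<union> W) adjn en. proj_dual V adj e (V \<union> W) adjn en x = ZK_minus_E - l}"
  assumes "F \<noteq> {}"
  shows "finite F" "(\<Sum>x\<in>F. zcoef (V \<union> W) adjn en x) = zcoef V adj e (ZK_minus_E - l)"
proof -
  let ?B = "lattice_simplex W (nat fibre_degree)"
  have degree: "0 \<le> fibre_degree"
    using assms fibre_subset_image(1) by blast
  have sub: "F \<subseteq> fibre_point ` ?B"
    using fibre_subset_image(2) by (auto simp: F_def)
  have fin: "finite (fibre_point ` ?B)"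
    using finite_lattice_simplex[OF finite_W] by simp
  show "finite F"
    using sub fin by (rule finite_subset)
  have "(\<Sum>x\<in>F. zcoef (V \<union> W) adjn en x) = (\<Sum>x\<in>fibre_point ` ?B. zcoef (V \<union> W) adjn en x)"
    using fibre_point_in_supp_dual proj_dual_fibre_point
    by (intro sum.mono_neutral_left[OF fin sub]) (auto simp: F_def)
  also have "\<dots> = (\<Sum>n\<in>?B. zcoef (V \<union> W) adjn en (fibre_point n))"
    by (rule sum.reindex[OF inj_on_fibre_point, unfolded comp_def])
  also have "\<dots> = (\<Sum>n\<in>?B. taylor_coeff (int (card W) + (-1)) (nat fibre_degree - sum n W)) *
      zcoef V adj e (ZK_minus_E - l)"
    using degree by (simp add: zcoef_fibre_point sum_distrib_right)
  also have "\<dots> = zcoef V adj e (ZK_minus_E - l)"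
    by (simp only: sum_lattice_simplex_taylor_coeff[OF finite_W] taylor_coeff_minus_one mult_1)
  finally show "(\<Sum>x\<in>F. zcoef (V \<union> W) adjn en x) = zcoef V adj e (ZK_minus_E - l)" .
qed

end

theorem mainTheorem6:
  fixes V W :: "'v set" and adj adjn :: "'v \<Rightarrow> 'v \<Rightarrow> bool"
    and e en :: "'v \<Rightarrow> int" and v0 :: 'v and lc :: "'v \<Rightarrow> rat"
  assumes ell: "elliptic V adj e"
    and v0: "v0 \<in> V" "valency V adj v0 = 1"
    and W: "finite W" "W \<noteq> {}" "W \<inter> V = {}"
    and adjn: "\<And>u w. adjn u w \<longleftrightarrow>
         (u \<in> V \<and> w \<in> V \<and> adj u w) \<or> (u = v0 \<and> w \<in> W) \<or> (u \<in> W \<and> w = v0)"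
    and en: "\<And>u. u \<in> V \<Longrightarrow> en u = e u"
    and elln: "elliptic (V \<union> W) adjn en"
    and lc: "lc \<in> supp_dual V adj e"
    and ne: "{x \<in> supp_dual (V \<union> W) adjn en. proj_dual V adj e (V \<union> W) adjn en x = lc} \<noteq> {}"
  shows "finite {x \<in> supp_dual (V \<union> W) adjn en. proj_dual V adj e (V \<union> W) adjn en x = lc}
     \<and> (\<Sum>x\<in>{x \<in> supp_dual (V \<union> W) adjn en. proj_dual V adj e (V \<union> W) adjn en x = lc}.
           zcoef (V \<union> W) adjn en x) = zcoef V adj e lc"
proof -
  have "decorated_tree V adj e" "decorated_tree (V \<union> W) adjn en"
    using ell elln by (simp_all add: elliptic_def)
  moreover obtain l where lc_eq: "lc = ZK V adj e - EG V - l"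
    and "in_L V l" "\<not> strict_neg V l" "zcoef V adj e (ZK V adj e - EG V - l) \<noteq> 0"
    using lc unfolding supp_dual_def by blast
  ultimately interpret extension_fibre V W adj adjn e en v0 l
    using v0 W(3) adjn en by unfold_locales simp_all
  show ?thesis
    using sum_zcoef_fibre ne unfolding lc_eq by blast
qed

end
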